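(* Let $G$ be a connected nontrivial graph with $m$ vertices and let $n\geq2$. If $\min\{(3n-2)\lambda(G),\ m+2e(G)\}> \min\{2\xi(G)+4,\ 5\delta(G)+1\}$, then $G\boxtimes P_n$ is super restricted edge-connected.
   Context: All graphs are finite, simple and undirected; "nontrivial" means having at least two vertices. $P_n$ denotes the path on $n$ vertices. For a graph $G$: $e(G)=|E(G)|$; $\delta(G)$ is the minimum degree; $\lambda(G)$ is the edge-connectivity; for an edge $uv$, its edge-degree is $d_G(u)+d_G(v)-2$, and $\xi(G)$ is the minimum edge-degree over all edges of $G$. A restricted edge-cut of a connected graph $G$ is a set $S\subseteq E(G)$ such that $G-S$ is disconnected and every component of $G-S$ has at least $2$ vertices; $\lambda'(G)$ is the minimum cardinality of a restricted edge-cut. A graph is super restricted edge-connected if every minimum restricted edge-cut $S$ isolates an edge, i.e. some component of $G-S$ consists of exactly two (adjacent) vertices. The strong product $G\boxtimes H$ has vertex set $V(G)\times V(H)$, with $(x_1,y_1)$ and $(x_2,y_2)$ adjacent iff either $x_1=x_2$ and $y_1y_2\in E(H)$, or $y_1=y_2$ and $x_1x_2\in E(G)$, or $x_1x_2\in E(G)$ and $y_1y_2\in E(H)$. *)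

theory Defs
  imports Main
begin

type_synonym 'a sgraph = "'a set \<times> 'a set set"

definition verts :: "'a sgraph \<Rightarrow> 'a set" where "verts G = fst G"
definition edges :: "'a sgraph \<Rightarrow> 'a set set" where "edges G = snd G"

definition sgraph :: "'a sgraph \<Rightarrow> bool" where
  "sgraph G \<longleftrightarrow> finite (verts G) \<and>
     (\<forall>e\<in>edges G. \<exists>u v. e = {u, v} \<and> u \<noteq> v \<and> u \<in> verts G \<and> v \<in> verts G)"

definition adj :: "'a sgraph \<Rightarrow> 'a \<Rightarrow> 'a \<Rightarrow> bool" where
  "adj G u v \<longleftrightarrow> {u, v} \<in> edges G"

definition reachable :: "'a sgraph \<Rightarrow> 'a \<Rightarrow> 'a \<Rightarrow> bool" where
  "reachable G = (adj G)\<^sup>*\<^sup>*"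

definition connected :: "'a sgraph \<Rightarrow> bool" where
  "connected G \<longleftrightarrow> (\<forall>u\<in>verts G. \<forall>v\<in>verts G. reachable G u v)"

definition component :: "'a sgraph \<Rightarrow> 'a \<Rightarrow> 'a set" where
  "component G v = {u \<in> verts G. reachable G v u}"

definition nontrivial :: "'a sgraph \<Rightarrow> bool" where
  "nontrivial G \<longleftrightarrow> card (verts G) \<ge> 2"

definition num_edges :: "'a sgraph \<Rightarrow> nat" where
  "num_edges G = card (edges G)"

definition degree :: "'a sgraph \<Rightarrow> 'a \<Rightarrow> nat" where
  "degree G v = card {e \<in> edges G. v \<in> e}"

definition min_degree :: "'a sgraph \<Rightarrow> nat" where
  "min_degree G = Min (degree G ` verts G)"

definition min_edge_degree :: "'a sgraph \<Rightarrow> nat" where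
  "min_edge_degree G =
     Min {degree G u + degree G v - 2 | u v. {u, v} \<in> edges G \<and> u \<noteq> v}"

definition del_edges :: "'a sgraph \<Rightarrow> 'a set set \<Rightarrow> 'a sgraph" where
  "del_edges G S = (verts G, edges G - S)"

definition edge_cut :: "'a sgraph \<Rightarrow> 'a set set \<Rightarrow> bool" where
  "edge_cut G S \<longleftrightarrow> S \<subseteq> edges G \<and> \<not> connected (del_edges G S)"

definition edge_connectivity :: "'a sgraph \<Rightarrow> nat" where
  "edge_connectivity G = Min (card ` {S. edge_cut G S})"

definition restricted_edge_cut :: "'a sgraph \<Rightarrow> 'a set set \<Rightarrow> bool" where
  "restricted_edge_cut G S \<longleftrightarrow> edge_cut G S \<and>
     (\<forall>v\<in>verts G. card (component (del_edges G S) v) \<ge> 2)"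

definition restricted_edge_connectivity :: "'a sgraph \<Rightarrow> nat" where
  "restricted_edge_connectivity G = Min (card ` {S. restricted_edge_cut G S})"

definition super_restricted_edge_connected :: "'a sgraph \<Rightarrow> bool" where
  "super_restricted_edge_connected G \<longleftrightarrow>
     (\<forall>S. restricted_edge_cut G S \<and> card S = restricted_edge_connectivity G \<longrightarrow>
        (\<exists>v\<in>verts G. card (component (del_edges G S) v) = 2))"

definition strong_product :: "'a sgraph \<Rightarrow> 'b sgraph \<Rightarrow> ('a \<times> 'b) sgraph" where
  "strong_product G H = (verts G \<times> verts H,
     {{(x1, y1), (x2, y2)} | x1 y1 x2 y2.
        x1 \<in> verts G \<and> x2 \<in> verts G \<and> y1 \<in> verts H \<and> y2 \<in> verts H \<and>
        ((x1 = x2 \<and> {y1, y2} \<in> edges H) \<or>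
         (y1 = y2 \<and> {x1, x2} \<in> edges G) \<or>
         ({x1, x2} \<in> edges G \<and> {y1, y2} \<in> edges H))})"

definition path_graph :: "nat \<Rightarrow> nat sgraph" where
  "path_graph n = ({0..<n}, {{i, Suc i} | i. Suc i < n})"

end

theory Submission
  imports Defs
begin

text \<open>Write X for G \<boxtimes> P_n and describe a vertex set C of X by its layers
  C_k = {x. (x, k) \<in> C}. An edge of X leaving C either lies in a layer, where it is an edge of G
  leaving C_k, or joins consecutive layers, where the edges leaving C correspond to pairs (x, y)
  with y in the closed neighbourhood N[x] and x \<in> C_k \<longleftrightarrow> y \<notin> C_{k+1}.

  Isolating an edge {(x, 0), (y, 0)} with xy of minimum edge-degree, or {(x, 0), (x, 1)} with x
  of minimum degree, shows \<lambda>'(X) \<le> min (2\<xi>(G) + 4) (5\<delta>(G) + 1). Now let S be a minimum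
  restricted edge-cut all of whose components have at least three vertices, and C a component.
  If C has a full and an empty layer, every pair (x, y) with y \<in> N[x] is cut between some two
  consecutive layers, so |S| \<ge> m + 2e(G). If all layers are proper, each layer contributes at
  least \<lambda>(G) and each pair of consecutive layers at least 2\<lambda>(G), so |S| \<ge> (3n - 2)\<lambda>(G). If
  some layer is empty but none is full, the nonempty layers form an interval, and counting the
  edges at its end layer and the layer next to it gives |S| > min (2\<xi>(G) + 4) (5\<delta>(G) + 1).
  A full layer without an empty one leaves an empty layer in every other component. Each case
  contradicts the hypothesis or the minimality of S, so S isolates an edge.\<close>

section \<open>Neighbourhoods, edge boundaries and connectivity\<close>

definition neighbours :: "'a sgraph \<Rightarrow> 'a \<Rightarrow> 'a set" where
  "neighbours H x = {y. {x, y} \<in> edges H}"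

definition closed_neighbours :: "'a sgraph \<Rightarrow> 'a \<Rightarrow> 'a set" where
  "closed_neighbours H x = insert x (neighbours H x)"

definition edge_boundary :: "'a sgraph \<Rightarrow> 'a set \<Rightarrow> 'a set set" where
  "edge_boundary H U = {e \<in> edges H. \<exists>p q. e = {p, q} \<and> p \<in> U \<and> q \<notin> U}"

lemma neighbours_sym: "y \<in> neighbours H x \<longleftrightarrow> x \<in> neighbours H y"
  by (simp add: neighbours_def insert_commute)

lemma closed_neighbours_sym: "y \<in> closed_neighbours H x \<longleftrightarrow> x \<in> closed_neighbours H y"
  by (auto simp: closed_neighbours_def neighbours_sym)

lemma edge_boundary_subset_edges: "edge_boundary H U \<subseteq> edges H"
  by (auto simp: edge_boundary_def)

lemma verts_del_edges [simp]: "verts (del_edges H S) = verts H"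
  by (simp add: del_edges_def verts_def)

lemma adj_del_edges: "adj (del_edges H S) u v \<longleftrightarrow> {u, v} \<in> edges H \<and> {u, v} \<notin> S"
  by (simp add: adj_def del_edges_def edges_def)

lemma reachable_sym: "reachable H u w \<Longrightarrow> reachable H w u"
proof -
  have "symp (adj H)" by (auto simp: symp_def adj_def insert_commute)
  then show "reachable H u w \<Longrightarrow> reachable H w u"
    unfolding reachable_def by (meson sympD symp_rtranclp)
qed

lemma reachable_trans: "reachable H u v \<Longrightarrow> reachable H v w \<Longrightarrow> reachable H u w"
  unfolding reachable_def by simp

lemma reachable_del_edge_boundary:
  assumes "reachable (del_edges H (edge_boundary H U)) u w" "u \<in> U"
  shows "w \<in> U"
  using assms unfolding reachable_def
proof (induction rule: rtranclp_induct)
  case (step y z)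
  then have "{y, z} \<in> edges H" "{y, z} \<notin> edge_boundary H U" by (auto simp: adj_del_edges)
  with step show ?case by (auto simp: edge_boundary_def)
qed simp

lemma not_connected_del_edge_boundary:
  assumes "u \<in> U" "u \<in> verts H" "w \<in> verts H" "w \<notin> U"
  shows "\<not> connected (del_edges H (edge_boundary H U))"
  using reachable_del_edge_boundary assms unfolding connected_def by fastforce

lemma component_subset: "component H v \<subseteq> verts H"
  by (auto simp: component_def)

lemma in_component_self: "v \<in> verts H \<Longrightarrow> v \<in> component H v"
  by (simp add: component_def reachable_def)

lemma components_disjoint:
  assumes "w \<in> verts H" "w \<notin> component H u"
  shows "component H u \<inter> component H w = {}"
proof (rule ccontr)
  assume "component H u \<inter> component H w \<noteq> {}"
  then obtain z where "reachable H u z" "reachable H w z" by (auto simp: component_def)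
  then have "reachable H u w" using reachable_sym reachable_trans by metis
  then show False using assms by (simp add: component_def)
qed

locale simple_graph =
  fixes G :: "'a sgraph"
  assumes sgraph: "sgraph G"
begin

lemma edge_ends:
  assumes "{x, y} \<in> edges G"
  shows "x \<noteq> y" "x \<in> verts G" "y \<in> verts G"
proof -
  obtain u v where "{x, y} = {u, v}" "u \<noteq> v" "u \<in> verts G" "v \<in> verts G"
    using assms sgraph unfolding sgraph_def by meson
  then have "(x = u \<and> y = v) \<or> (x = v \<and> y = u)" by (simp add: doubleton_eq_iff)
  then show "x \<noteq> y" "x \<in> verts G" "y \<in> verts G"
    using \<open>u \<noteq> v\<close> \<open>u \<in> verts G\<close> \<open>v \<in> verts G\<close> by auto
qed

lemma edgeE:
  assumes "e \<in> edges G"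
  obtains u v where "e = {u, v}" "u \<noteq> v" "u \<in> verts G" "v \<in> verts G"
  using assms sgraph unfolding sgraph_def by meson

lemma finite_verts: "finite (verts G)"
  using sgraph unfolding sgraph_def by simp

lemma finite_edges: "finite (edges G)"
proof -
  have "edges G \<subseteq> Pow (verts G)" by (auto elim: edgeE)
  then show ?thesis by (rule finite_subset) (simp add: finite_verts)
qed

lemma finite_vertex_subset: "U \<subseteq> verts G \<Longrightarrow> finite U"
  using finite_verts finite_subset by blast

lemma neighbours_subset: "neighbours G x \<subseteq> verts G"
  using edge_ends(3) by (auto simp: neighbours_def)

lemma not_in_neighbours: "x \<notin> neighbours G x"
  unfolding neighbours_def by (metis edge_ends(1) mem_Collect_eq)

lemma finite_neighbours: "finite (neighbours G x)"
  using finite_vertex_subset neighbours_subset by blast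

lemma closed_neighbours_subset: "x \<in> verts G \<Longrightarrow> closed_neighbours G x \<subseteq> verts G"
  using neighbours_subset by (auto simp: closed_neighbours_def)

lemma finite_closed_neighbours: "finite (closed_neighbours G x)"
  using finite_neighbours by (simp add: closed_neighbours_def)

lemma card_closed_neighbours: "card (closed_neighbours G x) = Suc (card (neighbours G x))"
  using finite_neighbours not_in_neighbours by (simp add: closed_neighbours_def)

lemma degree_eq_card_neighbours: "degree G x = card (neighbours G x)"
proof -
  have "{e \<in> edges G. x \<in> e} = (\<lambda>y. {x, y}) ` neighbours G x"
  proof (intro equalityI subsetI)
    fix e assume e: "e \<in> {e \<in> edges G. x \<in> e}"
    then obtain u v where "e = {u, v}" by (auto elim: edgeE)
    with e show "e \<in> (\<lambda>y. {x, y}) ` neighbours G x"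
      by (auto simp: neighbours_def insert_commute)
  qed (auto simp: neighbours_def)
  moreover have "inj_on (\<lambda>y. {x, y}) (neighbours G x)"
    by (auto simp: inj_on_def doubleton_eq_iff)
  ultimately show ?thesis unfolding degree_def by (simp add: card_image)
qed

lemma card_edge_boundary:
  assumes "U \<subseteq> verts G"
  shows "card (edge_boundary G U) = (\<Sum>p\<in>U. card (neighbours G p - U))"
proof -
  have "edge_boundary G U = (\<Union>p\<in>U. (\<lambda>q. {p, q}) ` (neighbours G p - U))"
    by (auto simp: edge_boundary_def neighbours_def)
  moreover have "card (\<Union>p\<in>U. (\<lambda>q. {p, q}) ` (neighbours G p - U)) =
      (\<Sum>p\<in>U. card ((\<lambda>q. {p, q}) ` (neighbours G p - U)))"
    using finite_vertex_subset[OF assms] finite_neighbours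
    by (intro card_UN_disjoint) (auto simp: doubleton_eq_iff)
  moreover have "card ((\<lambda>q. {p, q}) ` (neighbours G p - U)) = card (neighbours G p - U)" for p
    by (rule card_image) (auto simp: inj_on_def doubleton_eq_iff)
  ultimately show ?thesis by simp
qed

lemma sum_degree: "(\<Sum>x\<in>verts G. degree G x) = 2 * num_edges G"
proof -
  have "(\<Sum>x\<in>verts G. degree G x) = (\<Sum>x\<in>verts G. \<Sum>e\<in>edges G. of_bool (x \<in> e))"
    using finite_edges by (simp add: degree_def Int_def)
  also have "\<dots> = (\<Sum>e\<in>edges G. \<Sum>x\<in>verts G. of_bool (x \<in> e))"
    by (rule sum.swap)
  also have "\<dots> = (\<Sum>e\<in>edges G. 2)"
  proof (rule sum.cong)
    fix e assume "e \<in> edges G"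
    then obtain u v where "e = {u, v}" "u \<noteq> v" "u \<in> verts G" "v \<in> verts G" by (rule edgeE)
    then have "verts G \<inter> {x. x \<in> e} = {u, v}" by auto
    with \<open>u \<noteq> v\<close> show "(\<Sum>x\<in>verts G. of_bool (x \<in> e)) = (2::nat)"
      using finite_verts by (simp add: Int_def)
  qed simp
  finally show ?thesis by (simp add: num_edges_def)
qed

lemma finite_edge_cuts: "finite {S. edge_cut G S}"
  by (rule finite_subset[of _ "Pow (edges G)"]) (auto simp: edge_cut_def finite_edges)

lemma restricted_edge_connectivity_le:
  assumes "restricted_edge_cut G S"
  shows "restricted_edge_connectivity G \<le> card S"
proof -
  have "{S. restricted_edge_cut G S} \<subseteq> Pow (edges G)"
    by (auto simp: restricted_edge_cut_def edge_cut_def)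
  then have "finite {S. restricted_edge_cut G S}"
    by (rule finite_subset) (simp add: finite_edges)
  then show ?thesis unfolding restricted_edge_connectivity_def using assms by simp
qed

lemma edge_boundary_component_subset:
  "edge_boundary G (component (del_edges G S) v) \<subseteq> S"
proof
  fix e assume "e \<in> edge_boundary G (component (del_edges G S) v)"
  then obtain p q where pq: "e \<in> edges G" "e = {p, q}"
      "p \<in> component (del_edges G S) v" "q \<notin> component (del_edges G S) v"
    unfolding edge_boundary_def by blast
  show "e \<in> S"
  proof (rule ccontr)
    assume "e \<notin> S"
    then have "adj (del_edges G S) p q" using pq by (simp add: adj_del_edges)
    then have "reachable (del_edges G S) v q"
      using pq(3) unfolding component_def reachable_def
      by (metis (mono_tags) mem_Collect_eq rtranclp.rtrancl_into_rtrancl)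
    then show False using pq edge_ends(3) by (simp add: component_def)
  qed
qed

lemma card_edge_boundary_edge:
  assumes "{u, v} \<in> edges G"
  shows "card (edge_boundary G {u, v}) + 2 = degree G u + degree G v"
proof -
  have uv: "u \<in> verts G" "v \<in> verts G" "u \<noteq> v" using edge_ends[OF assms] by auto
  have nb: "v \<in> neighbours G u" "u \<in> neighbours G v"
    using assms by (simp_all add: neighbours_def insert_commute)
  have "Suc (card (neighbours G u - {v})) = degree G u"
    "Suc (card (neighbours G v - {u})) = degree G v"
    unfolding degree_eq_card_neighbours
    by (rule card_Suc_Diff1[OF finite_neighbours nb(1)] card_Suc_Diff1[OF finite_neighbours nb(2)])+
  moreover have "neighbours G u - {u, v} = neighbours G u - {v}"
    "neighbours G v - {u, v} = neighbours G v - {u}"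
    using not_in_neighbours by blast+
  moreover have "card (edge_boundary G {u, v}) =
      card (neighbours G u - {u, v}) + card (neighbours G v - {u, v})"
    using uv by (simp add: card_edge_boundary)
  ultimately show ?thesis by simp
qed

lemma two_le_card_component:
  assumes "{z, z'} \<in> edges G" "{z, z'} \<notin> S"
  shows "2 \<le> card (component (del_edges G S) z)"
proof -
  have z: "z \<noteq> z'" "z \<in> verts G" "z' \<in> verts G" using edge_ends[OF assms(1)] by auto
  have "adj (del_edges G S) z z'" using assms by (simp add: adj_del_edges)
  then have "reachable (del_edges G S) z z'" unfolding reachable_def by (rule r_into_rtranclp)
  then have "{z, z'} \<subseteq> component (del_edges G S) z"
    using z in_component_self[of z "del_edges G S"] by (simp add: component_def)
  moreover have "finite (component (del_edges G S) z)"
    using finite_vertex_subset component_subset[of "del_edges G S" z] by simp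
  ultimately have "card {z, z'} \<le> card (component (del_edges G S) z)" by (rule card_mono[rotated])
  then show ?thesis using z(1) by simp
qed

lemma restricted_edge_cut_edge_boundary_edge:
  assumes uv: "{u, v} \<in> edges G"
    and w: "w \<in> verts G" "w \<notin> {u, v}"
    and away: "\<And>z. z \<in> verts G \<Longrightarrow> z \<notin> {u, v} \<Longrightarrow> \<exists>z'. {z, z'} \<in> edges G \<and> z' \<notin> {u, v}"
  shows "restricted_edge_cut G (edge_boundary G {u, v})"
proof -
  let ?S = "edge_boundary G {u, v}"
  have "\<not> connected (del_edges G ?S)"
    using edge_ends(2)[OF uv] w by (intro not_connected_del_edge_boundary[of u]) auto
  then have "edge_cut G ?S" unfolding edge_cut_def using edge_boundary_subset_edges by blast
  moreover have "2 \<le> card (component (del_edges G ?S) z)" if z: "z \<in> verts G" for z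
  proof (cases "z \<in> {u, v}")
    case True
    then obtain z' where "{z, z'} = {u, v}" by auto
    moreover have "{u, v} \<notin> ?S" by (auto simp: edge_boundary_def doubleton_eq_iff)
    ultimately show ?thesis using uv two_le_card_component by metis
  next
    case False
    then obtain z' where z': "{z, z'} \<in> edges G" "z' \<notin> {u, v}" using away z by blast
    then have "{z, z'} \<notin> ?S" using False by (auto simp: edge_boundary_def doubleton_eq_iff)
    with z'(1) show ?thesis by (rule two_le_card_component)
  qed
  ultimately show ?thesis unfolding restricted_edge_cut_def by simp
qed

end

locale connected_graph = simple_graph +
  assumes connected: "connected G" and nontrivial: "nontrivial G"
begin

lemma exists_other_vertex: "\<exists>y\<in>verts G. y \<noteq> x"
proof (rule ccontr)
  assume "\<not> (\<exists>y\<in>verts G. y \<noteq> x)"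
  then have "verts G \<subseteq> {x}" by blast
  then have "card (verts G) \<le> card {x}" by (intro card_mono) simp_all
  then show False using nontrivial by (simp add: nontrivial_def)
qed

lemma neighbours_nonempty:
  assumes "x \<in> verts G"
  shows "neighbours G x \<noteq> {}"
proof -
  obtain y where "y \<in> verts G" "y \<noteq> x" using exists_other_vertex by blast
  then have "(adj G)\<^sup>*\<^sup>* x y" "x \<noteq> y"
    using connected assms unfolding connected_def reachable_def by auto
  then obtain z where "adj G x z" by (metis converse_rtranclpE)
  then show ?thesis by (auto simp: neighbours_def adj_def)
qed

lemma edge_connectivity_le_boundary:
  assumes "U \<subseteq> verts G" "U \<noteq> {}" "U \<noteq> verts G"
  shows "edge_connectivity G \<le> card (edge_boundary G U)"
proof -
  obtain u w where "u \<in> U" "w \<in> verts G" "w \<notin> U" using assms by blast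
  then have "\<not> connected (del_edges G (edge_boundary G U))"
    using assms(1) by (intro not_connected_del_edge_boundary[of u]) auto
  then have "edge_cut G (edge_boundary G U)"
    unfolding edge_cut_def using edge_boundary_subset_edges by blast
  then show ?thesis unfolding edge_connectivity_def using finite_edge_cuts by simp
qed

lemma edge_connectivity_pos: "1 \<le> edge_connectivity G"
proof -
  obtain x where x: "x \<in> verts G" using exists_other_vertex by blast
  then obtain y where "y \<in> neighbours G x" using neighbours_nonempty by blast
  then have "y \<in> verts G" "y \<notin> {x}" using neighbours_subset not_in_neighbours by auto
  then have "\<not> connected (del_edges G (edge_boundary G {x}))"
    using x by (intro not_connected_del_edge_boundary[of x]) auto
  then have "edge_cut G (edge_boundary G {x})"
    unfolding edge_cut_def using edge_boundary_subset_edges by blast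
  then have "edge_connectivity G \<in> card ` {S. edge_cut G S}"
    unfolding edge_connectivity_def using finite_edge_cuts by (intro Min_in) auto
  then obtain S where S: "edge_cut G S" "edge_connectivity G = card S" by blast
  have "finite S" using S(1) finite_edges by (meson edge_cut_def finite_subset)
  moreover have "S \<noteq> {}"
    using S(1) connected by (auto simp: edge_cut_def del_edges_def verts_def edges_def)
  ultimately show ?thesis using S(2) by (simp add: Suc_leI card_gt_0_iff)
qed

lemma min_degree_le: "x \<in> verts G \<Longrightarrow> min_degree G \<le> degree G x"
  unfolding min_degree_def using finite_verts by simp

lemma min_degree_attained: "\<exists>x\<in>verts G. degree G x = min_degree G"
proof -
  have "verts G \<noteq> {}" using exists_other_vertex by blast
  then have "min_degree G \<in> degree G ` verts G"
    unfolding min_degree_def using finite_verts by (intro Min_in) auto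
  then show ?thesis by auto
qed

lemma degree_pos: "x \<in> verts G \<Longrightarrow> 1 \<le> degree G x"
  using neighbours_nonempty finite_neighbours
  by (simp add: degree_eq_card_neighbours Suc_leI card_gt_0_iff)

lemma min_degree_pos: "1 \<le> min_degree G"
  using min_degree_attained degree_pos by metis

lemma edge_connectivity_le_min_degree: "edge_connectivity G \<le> min_degree G"
proof -
  obtain x where x: "x \<in> verts G" "degree G x = min_degree G" using min_degree_attained by blast
  then obtain y where "y \<in> neighbours G x" using neighbours_nonempty by blast
  then have "y \<in> verts G" "y \<noteq> x" using neighbours_subset not_in_neighbours by auto
  then have "{x} \<noteq> verts G" by blast
  then have "edge_connectivity G \<le> card (edge_boundary G {x})"
    using x by (intro edge_connectivity_le_boundary) auto
  also have "\<dots> = degree G x"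
    using x not_in_neighbours by (simp add: card_edge_boundary degree_eq_card_neighbours)
  finally show ?thesis using x by simp
qed

lemma finite_edge_degrees:
  "finite {degree G u + degree G v - 2 | u v. {u, v} \<in> edges G \<and> u \<noteq> v}"
proof -
  have "{degree G u + degree G v - 2 | u v. {u, v} \<in> edges G \<and> u \<noteq> v} \<subseteq>
      (\<lambda>(u, v). degree G u + degree G v - 2) ` (verts G \<times> verts G)"
  proof
    fix d assume "d \<in> {degree G u + degree G v - 2 | u v. {u, v} \<in> edges G \<and> u \<noteq> v}"
    then obtain u v where "d = degree G u + degree G v - 2" "{u, v} \<in> edges G" by blast
    then show "d \<in> (\<lambda>(u, v). degree G u + degree G v - 2) ` (verts G \<times> verts G)"
      using edge_ends(2,3) by force
  qed
  moreover have "finite ((\<lambda>(u, v). degree G u + degree G v - 2) ` (verts G \<times> verts G))"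
    using finite_verts by simp
  ultimately show ?thesis by (rule finite_subset)
qed

lemma min_edge_degree_le:
  assumes "{x, y} \<in> edges G"
  shows "min_edge_degree G + 2 \<le> degree G x + degree G y"
proof -
  have "min_edge_degree G \<le> degree G x + degree G y - 2"
    unfolding min_edge_degree_def using assms edge_ends(1)[OF assms] finite_edge_degrees
    by (intro Min_le) auto
  \<comment> \<open>positive degrees make the truncated subtraction in the definition of \<xi> exact\<close>
  moreover have "1 \<le> degree G x" "1 \<le> degree G y" using degree_pos edge_ends[OF assms] by auto
  ultimately show ?thesis by simp
qed

lemma min_edge_degree_attained:
  "\<exists>x y. {x, y} \<in> edges G \<and> degree G x + degree G y = min_edge_degree G + 2"
proof -
  obtain x where "x \<in> verts G" using exists_other_vertex by blast
  then obtain y where "y \<in> neighbours G x" using neighbours_nonempty by blast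
  then have "{x, y} \<in> edges G" "x \<noteq> y" using not_in_neighbours by (auto simp: neighbours_def)
  then have "min_edge_degree G \<in> {degree G u + degree G v - 2 | u v. {u, v} \<in> edges G \<and> u \<noteq> v}"
    unfolding min_edge_degree_def using finite_edge_degrees by (intro Min_in) auto
  then obtain u v where uv: "min_edge_degree G = degree G u + degree G v - 2" "{u, v} \<in> edges G"
    by blast
  moreover have "1 \<le> degree G u" "1 \<le> degree G v" using degree_pos edge_ends[OF uv(2)] by auto
  ultimately have "degree G u + degree G v = min_edge_degree G + 2" by linarith
  then show ?thesis using uv(2) by blast
qed

end

section \<open>Crossings of closed neighbourhoods\<close>

definition closed_arcs :: "'a sgraph \<Rightarrow> ('a \<times> 'a) set" where
  "closed_arcs H = (SIGMA x:verts H. closed_neighbours H x)"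

definition arcs :: "'a sgraph \<Rightarrow> ('a \<times> 'a) set" where
  "arcs H = (SIGMA x:verts H. neighbours H x)"

text \<open>For consecutive layers A and B of a vertex set of G \<boxtimes> P_n, this counts the edges
  between the two layers that leave the set.\<close>

definition crossings :: "'a sgraph \<Rightarrow> 'a set \<Rightarrow> 'a set \<Rightarrow> nat" where
  "crossings H A B = card {p \<in> closed_arcs H. (fst p \<in> A) \<noteq> (snd p \<in> B)}"

lemma double_le_deficit_sum:
  fixes a b d :: nat
  assumes "1 \<le> a" "1 \<le> b"
  shows "2 * d \<le> a * (1 + (d - b)) + b * (1 + (d - a))"
proof -
  consider "d \<le> a" "d \<le> b" | "d \<le> a" "b < d" | "a < d" "d \<le> b" | "a < d" "b < d"
    by linarith
  then show ?thesis
  proof cases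
    case 1
    then show ?thesis by (simp add: algebra_simps)
  next
    case 2
    then have "d * 2 \<le> a * (1 + (d - b))" by (intro mult_le_mono) auto
    then show ?thesis by linarith
  next
    case 3
    then have "d * 2 \<le> b * (1 + (d - a))" by (intro mult_le_mono) auto
    then show ?thesis by linarith
  next
    case 4
    define s t where "s = d - a" and "t = d - b"
    then have st: "d = a + s" "d = b + t" "1 \<le> s" "1 \<le> t" using 4 by simp_all
    have "(int a - 1) * (int t - 1) \<ge> 0" "(int b - 1) * (int s - 1) \<ge> 0"
      using assms st by simp_all
    moreover have "int (a * (1 + t) + b * (1 + s)) - int (2 * d) =
        (int a - 1) * (int t - 1) + (int b - 1) * (int s - 1) + (int a + int b - 2)"
      using st by (simp add: algebra_simps)
    ultimately have "2 * d \<le> a * (1 + t) + b * (1 + s)" using assms by linarith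
    then show ?thesis by (simp only: s_def t_def)
  qed
qed

context simple_graph
begin

lemma card_closed_arcs: "card (closed_arcs G) = card (verts G) + 2 * num_edges G"
proof -
  have "card (closed_arcs G) = (\<Sum>x\<in>verts G. Suc (degree G x))"
    unfolding closed_arcs_def using finite_verts finite_closed_neighbours
    by (simp add: card_closed_neighbours degree_eq_card_neighbours)
  also have "\<dots> = card (verts G) + 2 * num_edges G"
    by (simp add: sum_Suc sum_degree)
  finally show ?thesis .
qed

lemma finite_closed_arcs: "finite (closed_arcs G)"
  unfolding closed_arcs_def using finite_verts finite_closed_neighbours by simp

lemma finite_arcs: "finite (arcs G)"
  unfolding arcs_def using finite_verts finite_neighbours by simp

lemma swap_closed_arcs: "(y, x) \<in> closed_arcs G \<longleftrightarrow> (x, y) \<in> closed_arcs G"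
  using closed_neighbours_subset closed_neighbours_sym[of _ G]
  by (auto simp: closed_arcs_def)

lemma swap_arcs: "(y, x) \<in> arcs G \<longleftrightarrow> (x, y) \<in> arcs G"
  using neighbours_subset neighbours_sym[of _ G] by (auto simp: arcs_def)

lemma sum_arcs_swap: "(\<Sum>p\<in>arcs G. h (prod.swap p)) = (\<Sum>p\<in>arcs G. h p)"
proof -
  have "prod.swap ` arcs G = arcs G"
  proof (intro equalityI subsetI)
    fix p assume "p \<in> arcs G"
    then show "p \<in> prod.swap ` arcs G"
      using swap_arcs by (intro image_eqI[of _ _ "prod.swap p"]) (cases p, auto)+
  qed (use swap_arcs in auto)
  then show ?thesis using sum.reindex[of prod.swap "arcs G" h] by (simp add: comp_def)
qed

lemma card_edge_boundary_arcs:
  assumes "U \<subseteq> verts G"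
  shows "card (edge_boundary G U) = (\<Sum>p\<in>arcs G. of_bool (fst p \<in> U \<and> snd p \<notin> U))"
proof -
  have "card (edge_boundary G U) = card (SIGMA x:U. neighbours G x - U)"
    using finite_vertex_subset[OF assms] finite_neighbours
    by (simp add: card_edge_boundary[OF assms])
  also have "(SIGMA x:U. neighbours G x - U) = {p \<in> arcs G. fst p \<in> U \<and> snd p \<notin> U}"
    using assms by (auto simp: arcs_def)
  finally show ?thesis using finite_arcs by (simp add: Int_def)
qed

lemma crossings_eq_sum:
  assumes "A \<subseteq> verts G" "B \<subseteq> verts G"
  shows "crossings G A B =
    (\<Sum>x\<in>A. card (closed_neighbours G x - B)) + (\<Sum>y\<in>B. card (closed_neighbours G y - A))"
proof -
  let ?out = "SIGMA x:A. closed_neighbours G x - B"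
  let ?into = "prod.swap ` (SIGMA y:B. closed_neighbours G y - A)"
  have "{p \<in> closed_arcs G. (fst p \<in> A) \<noteq> (snd p \<in> B)} = ?out \<union> ?into"
    using assms closed_neighbours_subset closed_neighbours_sym[of _ G]
    by (auto simp: closed_arcs_def image_iff) (meson subsetD)
  moreover have "finite ?out" "finite ?into" "?out \<inter> ?into = {}"
    using assms finite_vertex_subset finite_closed_neighbours by auto
  moreover have "card ?into = card (SIGMA y:B. closed_neighbours G y - A)"
    by (simp add: card_image)
  ultimately show ?thesis
    using assms finite_vertex_subset finite_closed_neighbours
    by (simp add: crossings_def card_Un_disjoint)
qed

lemma crossings_complement:
  "crossings G (verts G - A) (verts G - B) = crossings G A B"
proof -
  have "{p \<in> closed_arcs G. (fst p \<in> verts G - A) \<noteq> (snd p \<in> verts G - B)} =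
      {p \<in> closed_arcs G. (fst p \<in> A) \<noteq> (snd p \<in> B)}"
    using closed_neighbours_subset by (auto simp: closed_arcs_def) (meson subsetD)+
  then show ?thesis by (simp add: crossings_def)
qed

text \<open>Each arc leaving A \<inter> B or A \<union> B is counted, in one of its two orientations, among the
  crossings of (A, B).\<close>

lemma boundary_inter_union_le_crossings:
  assumes "A \<subseteq> verts G" "B \<subseteq> verts G"
  shows "card (edge_boundary G (A \<inter> B)) + card (edge_boundary G (A \<union> B)) \<le> crossings G A B"
proof -
  define out where "out U p = (of_bool (fst p \<in> U \<and> snd p \<notin> U) :: nat)"
    for U :: "'a set" and p :: "'a \<times> 'a"
  define cross where "cross p = (of_bool ((fst p \<in> A) \<noteq> (snd p \<in> B)) :: nat)" for p
  have pointwise: "out (A \<inter> B) p + out (A \<inter> B) (prod.swap p) + out (A \<union> B) p +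
      out (A \<union> B) (prod.swap p) \<le> cross p + cross (prod.swap p)" for p
    unfolding out_def cross_def by (cases p) auto
  have boundary: "card (edge_boundary G U) = (\<Sum>p\<in>arcs G. out U p)"
    "card (edge_boundary G U) = (\<Sum>p\<in>arcs G. out U (prod.swap p))"
    if "U \<subseteq> verts G" for U
    using card_edge_boundary_arcs[OF that] sum_arcs_swap[of "out U"] by (simp_all add: out_def)
  have "2 * (card (edge_boundary G (A \<inter> B)) + card (edge_boundary G (A \<union> B))) =
      (\<Sum>p\<in>arcs G. out (A \<inter> B) p + out (A \<inter> B) (prod.swap p) + out (A \<union> B) p +
        out (A \<union> B) (prod.swap p))"
    using boundary[of "A \<inter> B"] boundary[of "A \<union> B"] assms
    by (simp add: sum.distrib le_infI1 Un_least)
  also have "\<dots> \<le> (\<Sum>p\<in>arcs G. cross p + cross (prod.swap p))"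
    by (rule sum_mono) (rule pointwise)
  also have "\<dots> = 2 * (\<Sum>p\<in>arcs G. cross p)"
    using sum_arcs_swap[of cross] by (simp add: sum.distrib)
  also have "\<dots> = 2 * card {p \<in> arcs G. (fst p \<in> A) \<noteq> (snd p \<in> B)}"
    using finite_arcs by (simp add: cross_def Int_def)
  also have "\<dots> \<le> 2 * crossings G A B"
    unfolding crossings_def using finite_closed_arcs
    by (auto simp: arcs_def closed_arcs_def closed_neighbours_def intro!: card_mono)
  finally show ?thesis by simp
qed

end

context connected_graph
begin

lemma two_min_degree_le_crossings:
  assumes "A \<subseteq> verts G" "B \<subseteq> verts G" "A \<inter> B = {}" "A \<noteq> {}" "B \<noteq> {}"
  shows "2 * min_degree G \<le> crossings G A B"
proof -
  let ?d = "min_degree G"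
  have one: "1 + (?d - card Y) \<le> card (closed_neighbours G x - Y)"
    if "x \<in> verts G" "x \<notin> Y" "finite Y" for x Y
  proof -
    have "card (closed_neighbours G x - Y) = 1 + card (neighbours G x - Y)"
      using that not_in_neighbours finite_neighbours
      by (simp add: closed_neighbours_def insert_Diff_if)
    moreover have "card (neighbours G x) - card Y \<le> card (neighbours G x - Y)"
      using that(3) by (rule diff_card_le_card_Diff)
    ultimately show ?thesis
      using min_degree_le[OF that(1)] by (simp add: degree_eq_card_neighbours)
  qed
  have fin: "finite A" "finite B" using assms finite_vertex_subset by auto
  have "(\<Sum>x\<in>A. 1 + (?d - card B)) \<le> (\<Sum>x\<in>A. card (closed_neighbours G x - B))"
    "(\<Sum>y\<in>B. 1 + (?d - card A)) \<le> (\<Sum>y\<in>B. card (closed_neighbours G y - A))"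
    using assms fin by (intro sum_mono one; auto)+
  moreover have "2 * ?d \<le> card A * (1 + (?d - card B)) + card B * (1 + (?d - card A))"
    using assms fin by (intro double_le_deficit_sum) (simp_all add: Suc_leI card_gt_0_iff)
  ultimately show ?thesis using crossings_eq_sum[OF assms(1,2)] by simp
qed

lemma two_edge_connectivity_le_crossings:
  assumes A: "A \<subseteq> verts G" "A \<noteq> {}" "A \<noteq> verts G"
    and B: "B \<subseteq> verts G" "B \<noteq> {}" "B \<noteq> verts G"
  shows "2 * edge_connectivity G \<le> crossings G A B"
proof -
  consider "A \<inter> B = {}" | "A \<union> B = verts G" | "A \<inter> B \<noteq> {}" "A \<union> B \<noteq> verts G" by blast
  then show ?thesis
  proof cases
    case 1
    then show ?thesis
      using two_min_degree_le_crossings[OF A(1) B(1) _ A(2) B(2)] edge_connectivity_le_min_degree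
      by linarith
  next
    case 2
    then have "2 * min_degree G \<le> crossings G (verts G - A) (verts G - B)"
      using A B by (intro two_min_degree_le_crossings) auto
    then show ?thesis
      using crossings_complement edge_connectivity_le_min_degree
      by (metis mult_le_mono2 order_trans)
  next
    case 3
    then have "edge_connectivity G \<le> card (edge_boundary G (A \<inter> B))"
      "edge_connectivity G \<le> card (edge_boundary G (A \<union> B))"
      using A B by (auto intro!: edge_connectivity_le_boundary)
    then show ?thesis using boundary_inter_union_le_crossings[OF A(1) B(1)] by linarith
  qed
qed

end

section \<open>Layered vertex sets of G \<boxtimes> P_n\<close>

text \<open>The layer-l part of the neighbourhood of (x, k) in G \<boxtimes> P_n, projected to G.\<close>

definition layer_nbhd :: "'a sgraph \<Rightarrow> 'a \<Rightarrow> nat \<Rightarrow> nat \<Rightarrow> 'a set" where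
  "layer_nbhd H x k l =
     (if l = k then neighbours H x
      else if l = Suc k \<or> k = Suc l then closed_neighbours H x else {})"

text \<open>For a vertex set of G \<boxtimes> P_n with layers A, the number of edges from its layer k to
  the layer l of its complement.\<close>

definition layer_edges :: "'a sgraph \<Rightarrow> (nat \<Rightarrow> 'a set) \<Rightarrow> nat \<Rightarrow> nat \<Rightarrow> nat" where
  "layer_edges H A k l = (\<Sum>x\<in>A k. card (layer_nbhd H x k l - A l))"

definition layered_boundary :: "'a sgraph \<Rightarrow> nat \<Rightarrow> (nat \<Rightarrow> 'a set) \<Rightarrow> nat" where
  "layered_boundary H n A = (\<Sum>(k, l)\<in>{..<n} \<times> {..<n}. layer_edges H A k l)"

lemma layer_edges_same: "layer_edges H A k k = (\<Sum>x\<in>A k. card (neighbours H x - A k))"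
  by (simp add: layer_edges_def layer_nbhd_def)

lemma layer_edges_adjacent:
  "l = Suc k \<or> k = Suc l \<Longrightarrow>
    layer_edges H A k l = (\<Sum>x\<in>A k. card (closed_neighbours H x - A l))"
  by (auto simp: layer_edges_def layer_nbhd_def)

lemma sum_layer_edges_le:
  assumes "P \<subseteq> {..<n} \<times> {..<n}"
  shows "(\<Sum>(k, l)\<in>P. layer_edges H A k l) \<le> layered_boundary H n A"
  unfolding layered_boundary_def by (rule sum_mono2) (use assms in auto)

lemma bool_sequence_switch:
  fixes f :: "nat \<Rightarrow> bool"
  assumes "f i \<noteq> f j"
  shows "\<exists>t. min i j \<le> t \<and> t < max i j \<and> f t \<noteq> f (Suc t)"
proof -
  have up: "\<exists>t. i \<le> t \<and> t < j \<and> f t \<noteq> f (Suc t)" if "i \<le> j" "f i \<noteq> f j" for i j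
    using that
  proof (induction j)
    case (Suc j)
    then have "i \<le> j" by (auto simp: le_Suc_eq)
    show ?case
    proof (cases "f j = f (Suc j)")
      case True
      then obtain t where "i \<le> t" "t < j" "f t \<noteq> f (Suc t)" using Suc \<open>i \<le> j\<close> by auto
      then show ?thesis by (intro exI[of _ t]) simp
    next
      case False
      then show ?thesis using \<open>i \<le> j\<close> by (intro exI[of _ j]) simp
    qed
  qed simp
  show ?thesis
  proof (cases "i \<le> j")
    case True
    then show ?thesis using up[OF True assms] by (simp add: min_def max_def)
  next
    case False
    then show ?thesis using up[of j i] assms by (simp add: min_def max_def)
  qed
qed

context simple_graph
begin

lemma layer_edges_same_boundary:
  "A k \<subseteq> verts G \<Longrightarrow> layer_edges G A k k = card (edge_boundary G (A k))"
  by (simp add: layer_edges_same card_edge_boundary)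

lemma layer_edges_pair:
  assumes "A k \<subseteq> verts G" "A (Suc k) \<subseteq> verts G"
  shows "layer_edges G A k (Suc k) + layer_edges G A (Suc k) k = crossings G (A k) (A (Suc k))"
  by (simp add: layer_edges_adjacent crossings_eq_sum[OF assms])

lemma layered_boundary_ge:
  assumes "\<forall>k<n. A k \<subseteq> verts G"
  shows "(\<Sum>k<n. card (edge_boundary G (A k))) + (\<Sum>k<n - 1. crossings G (A k) (A (Suc k)))
    \<le> layered_boundary G n A"
proof -
  let ?E = "\<lambda>(k, l). layer_edges G A k l"
  define diag up down where "diag = (\<lambda>k. (k, k)) ` {..<n}"
    and "up = (\<lambda>k. (k, Suc k)) ` {..<n - 1}" and "down = (\<lambda>k. (Suc k, k)) ` {..<n - 1}"
  have "sum ?E diag = (\<Sum>k<n. card (edge_boundary G (A k)))"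
    unfolding diag_def using assms
    by (subst sum.reindex) (auto simp: inj_on_def layer_edges_same_boundary)
  moreover have "sum ?E up + sum ?E down = (\<Sum>k<n - 1. crossings G (A k) (A (Suc k)))"
    unfolding up_def down_def using assms
    by (subst (1 2) sum.reindex) (auto simp: inj_on_def sum.distrib[symmetric] layer_edges_pair)
  moreover have "sum ?E (diag \<union> up \<union> down) = sum ?E diag + sum ?E up + sum ?E down"
    unfolding diag_def up_def down_def by (subst sum.union_disjoint; auto)+
  moreover have "sum ?E (diag \<union> up \<union> down) \<le> layered_boundary G n A"
    by (rule sum_layer_edges_le) (auto simp: diag_def up_def down_def)
  ultimately show ?thesis by linarith
qed

text \<open>Between a full layer i and an empty layer j, every closed arc (x, y) is cut by some pair
  of consecutive layers: follow the vertices x, y, x, ... through the layers i, i + 1, ... (or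
  downwards) and take the first step where membership changes.\<close>

lemma card_closed_arcs_le_crossings:
  assumes "i < n" "j < n" "A i = verts G" "A j = {}"
  shows "card (closed_arcs G) \<le> (\<Sum>k<n - 1. crossings G (A k) (A (Suc k)))"
proof -
  define cut where "cut k = {p \<in> closed_arcs G. (fst p \<in> A k) \<noteq> (snd p \<in> A (Suc k))}" for k
  define z where "z p t = (if even (t + i) then fst p else snd p)" for p :: "'a \<times> 'a" and t
  define switch where
    "switch p = (SOME t. min i j \<le> t \<and> t < max i j \<and> (z p t \<in> A t) \<noteq> (z p (Suc t) \<in> A (Suc t)))"
    for p
  define phi where "phi p = (switch p, (z p (switch p), z p (Suc (switch p))))" for p
  have switch: "min i j \<le> switch p \<and> switch p < max i j \<and>
      (z p (switch p) \<in> A (switch p)) \<noteq> (z p (Suc (switch p)) \<in> A (Suc (switch p)))"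
    if "p \<in> closed_arcs G" for p
    unfolding switch_def using that assms
    by (intro someI_ex[OF bool_sequence_switch[of "\<lambda>t. z p t \<in> A t"]])
       (auto simp: z_def closed_arcs_def)
  have z_pair: "(z p t, z p (Suc t)) = p \<or> (z p t, z p (Suc t)) = prod.swap p" for p t
    by (cases p) (simp add: z_def)
  have "phi ` closed_arcs G \<subseteq> (SIGMA k:{..<n - 1}. cut k)"
  proof
    fix q assume "q \<in> phi ` closed_arcs G"
    then obtain p where p: "p \<in> closed_arcs G" "q = phi p" by blast
    have "(z p t, z p (Suc t)) \<in> closed_arcs G" for t
      using z_pair[of p t] p(1) swap_closed_arcs by (cases p) auto
    then show "q \<in> (SIGMA k:{..<n - 1}. cut k)"
      using switch[OF p(1)] assms(1,2) by (auto simp: p(2) phi_def cut_def)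
  qed
  moreover have "inj_on phi (closed_arcs G)"
  proof
    fix p q assume "phi p = phi q"
    then have "switch p = switch q" "z p (switch p) = z q (switch p)"
      "z p (Suc (switch p)) = z q (Suc (switch p))" by (auto simp: phi_def)
    then show "p = q" by (cases "even (switch p + i)") (auto simp: z_def prod_eq_iff)
  qed
  moreover have "finite (SIGMA k:{..<n - 1}. cut k)"
    using finite_closed_arcs by (simp add: cut_def)
  ultimately have "card (closed_arcs G) \<le> card (SIGMA k:{..<n - 1}. cut k)"
    by (meson card_inj_on_le)
  also have "\<dots> = (\<Sum>k<n - 1. crossings G (A k) (A (Suc k)))"
    using finite_closed_arcs by (simp add: cut_def crossings_def)
  finally show ?thesis .
qed

lemma full_and_empty_layers_layered_boundary_ge:
  assumes "\<forall>k<n. A k \<subseteq> verts G" "i < n" "j < n" "A i = verts G" "A j = {}"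
  shows "card (verts G) + 2 * num_edges G \<le> layered_boundary G n A"
  using card_closed_arcs_le_crossings[OF assms(2-5)] layered_boundary_ge[OF assms(1)]
  by (simp add: card_closed_arcs)

end

context connected_graph
begin

lemma proper_layers_layered_boundary_ge:
  assumes "\<forall>k<n. A k \<subseteq> verts G \<and> A k \<noteq> {} \<and> A k \<noteq> verts G" "1 \<le> n"
  shows "(3 * n - 2) * edge_connectivity G \<le> layered_boundary G n A"
proof -
  let ?l = "edge_connectivity G"
  have "(\<Sum>k<n. ?l) \<le> (\<Sum>k<n. card (edge_boundary G (A k)))"
    using assms(1) by (intro sum_mono edge_connectivity_le_boundary) auto
  moreover have "(\<Sum>k<n - 1. 2 * ?l) \<le> (\<Sum>k<n - 1. crossings G (A k) (A (Suc k)))"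
    using assms(1) by (intro sum_mono two_edge_connectivity_le_crossings) auto
  moreover have "(3 * n - 2) * ?l = n * ?l + (n - 1) * (2 * ?l)"
    using assms(2) by (cases n) (simp_all add: algebra_simps)
  ultimately show ?thesis using layered_boundary_ge[of n A] assms(1) by simp
qed

end

text \<open>For a layer T next to an empty layer, the edges of G \<boxtimes> P_n leaving T within its own layer
  and towards the empty one number boundary_weight G T + card T.\<close>

definition boundary_weight :: "'a sgraph \<Rightarrow> 'a set \<Rightarrow> nat" where
  "boundary_weight H T = (\<Sum>v\<in>T. degree H v) + card (edge_boundary H T)"

context simple_graph
begin

lemma boundary_weight_mono:
  assumes "S \<subseteq> T" "T \<subseteq> verts G"
  shows "boundary_weight G S \<le> boundary_weight G T"
proof -
  let ?at = "\<lambda>w. {e \<in> edges G. w \<in> e}"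
  have fin: "finite T" using assms(2) finite_vertex_subset by blast
  have "edge_boundary G S \<subseteq> edge_boundary G T \<union> (\<Union>w\<in>T - S. ?at w)"
    using assms(1) by (auto simp: edge_boundary_def)
  moreover have "finite (edge_boundary G T \<union> (\<Union>w\<in>T - S. ?at w))"
    using fin finite_edges finite_subset[OF edge_boundary_subset_edges finite_edges] by auto
  ultimately have "card (edge_boundary G S) \<le> card (edge_boundary G T \<union> (\<Union>w\<in>T - S. ?at w))"
    by (rule card_mono[rotated])
  also have "\<dots> \<le> card (edge_boundary G T) + card (\<Union>w\<in>T - S. ?at w)"
    by (rule card_Un_le)
  also have "card (\<Union>w\<in>T - S. ?at w) \<le> (\<Sum>w\<in>T - S. degree G w)"
    unfolding degree_def using fin by (intro card_UN_le) simp
  finally have "card (edge_boundary G S) \<le> card (edge_boundary G T) + (\<Sum>w\<in>T - S. degree G w)"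
    by simp
  moreover have "(\<Sum>v\<in>T. degree G v) = (\<Sum>v\<in>T - S. degree G v) + (\<Sum>v\<in>S. degree G v)"
    using fin assms(1) by (simp add: sum.subset_diff)
  ultimately show ?thesis unfolding boundary_weight_def by linarith
qed

lemma boundary_weight_edge:
  "{x, y} \<in> edges G \<Longrightarrow> boundary_weight G {x, y} + 2 = 2 * (degree G x + degree G y)"
  using card_edge_boundary_edge edge_ends(1) by (simp add: boundary_weight_def)

lemma boundary_weight_singleton: "x \<in> verts G \<Longrightarrow> boundary_weight G {x} = 2 * degree G x"
  using not_in_neighbours
  by (simp add: boundary_weight_def card_edge_boundary degree_eq_card_neighbours)

lemma boundary_weight_independent:
  assumes "T \<subseteq> verts G" "\<forall>v\<in>T. neighbours G v \<inter> T = {}"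
  shows "boundary_weight G T = 2 * (\<Sum>v\<in>T. degree G v)"
proof -
  have "card (edge_boundary G T) = (\<Sum>v\<in>T. degree G v)"
    using assms by (simp add: card_edge_boundary degree_eq_card_neighbours Diff_triv)
  then show ?thesis by (simp add: boundary_weight_def)
qed

lemma layer_edges_end:
  assumes "A a \<subseteq> verts G" "l = Suc a \<or> a = Suc l" "A l = {}"
  shows "layer_edges G A a a + layer_edges G A a l = boundary_weight G (A a) + card (A a)"
  using assms
  by (simp add: layer_edges_same_boundary layer_edges_adjacent card_closed_neighbours
      degree_eq_card_neighbours boundary_weight_def sum_Suc)

lemma layer_edges_adjacent_ge:
  assumes "l = Suc k \<or> k = Suc l" "finite (A l)"
  shows "(\<Sum>w\<in>A k. Suc (degree G w) - card (A l)) \<le> layer_edges G A k l"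
  unfolding layer_edges_adjacent[OF assms(1)] using assms(2)
  by (intro sum_mono)
     (metis card_closed_neighbours degree_eq_card_neighbours diff_card_le_card_Diff)

end

context connected_graph
begin

lemma boundary_weight_ge:
  assumes "T \<subseteq> verts G" "2 \<le> card T"
  shows "2 * min_edge_degree G + 2 \<le> boundary_weight G T \<or>
    2 * card T * min_degree G \<le> boundary_weight G T"
proof (cases "\<exists>x\<in>T. \<exists>y\<in>T. {x, y} \<in> edges G")
  case True
  then obtain x y where xy: "x \<in> T" "y \<in> T" "{x, y} \<in> edges G" by blast
  then have "boundary_weight G {x, y} \<le> boundary_weight G T"
    using assms(1) by (intro boundary_weight_mono) auto
  then show ?thesis
    using boundary_weight_edge[OF xy(3)] min_edge_degree_le[OF xy(3)]
    by (intro disjI1) (simp add: algebra_simps)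
next
  case False
  then have "\<forall>v\<in>T. neighbours G v \<inter> T = {}" by (auto simp: neighbours_def)
  moreover have "card T * min_degree G \<le> (\<Sum>v\<in>T. degree G v)"
    using sum_mono[of T "\<lambda>_. min_degree G" "degree G"] min_degree_le assms(1) by auto
  ultimately show ?thesis using boundary_weight_independent[OF assms(1)] by simp
qed

lemma layer_edges_proper_pos:
  "A k \<subseteq> verts G \<Longrightarrow> A k \<noteq> {} \<Longrightarrow> A k \<noteq> verts G \<Longrightarrow> 1 \<le> layer_edges G A k k"
  using edge_connectivity_pos edge_connectivity_le_boundary
  by (simp add: layer_edges_same_boundary) (meson order_trans)

text \<open>The edge boundaries in G \<boxtimes> P_n of the edges {(x, 0), (y, 0)}, for an edge xy of
  minimum edge-degree, and {(x, 0), (x, 1)}, for x of minimum degree, have these two sizes.\<close>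

abbreviation isolated_edge_bound :: nat where
  "isolated_edge_bound \<equiv> min (2 * min_edge_degree G + 4) (5 * min_degree G + 1)"

lemma end_pair_next_to_layer_gt:
  assumes layers: "\<forall>k<n. A k \<subseteq> verts G \<and> A k \<noteq> verts G"
    and a: "a < n" "card (A a) = 2"
    and b: "b < n" "b = Suc a \<or> a = Suc b" "A b = {}"
    and c: "c < n" "c = Suc a \<or> a = Suc c" "c \<noteq> b" "A c \<noteq> {}"
  shows "isolated_edge_bound < layered_boundary G n A"
proof -
  let ?E = "layer_edges G A"
  have T: "A a \<subseteq> verts G" "finite (A a)" and R: "A c \<subseteq> verts G" "finite (A c)"
    using layers a(1) c(1) finite_vertex_subset by auto
  have "a \<noteq> c" "a \<noteq> b" using b(2) c(2) by auto
  then have "?E a a + ?E a b + ?E c c + ?E c a \<le> layered_boundary G n A"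
    using sum_layer_edges_le[of "{(a, a), (a, b), (c, c), (c, a)}" n G A] a b c by auto
  moreover have "?E a a + ?E a b = boundary_weight G (A a) + 2"
    using layer_edges_end[OF T(1) b(2,3)] a(2) by simp
  moreover have "1 \<le> ?E c c" using layers c by (intro layer_edges_proper_pos) auto
  moreover obtain z where z: "z \<in> A c" using c(4) by blast
  have "(\<Sum>w\<in>A c. Suc (degree G w) - card (A a)) \<le> ?E c a"
    using c(2) T(2) by (intro layer_edges_adjacent_ge) auto
  then have "Suc (degree G z) - 2 \<le> ?E c a"
    using R(2) z a(2) member_le_sum[of z "A c" "\<lambda>w. Suc (degree G w) - 2"] by simp
  moreover have "min_degree G \<le> degree G z" using R(1) z min_degree_le by blast
  moreover have "2 * min_edge_degree G + 2 \<le> boundary_weight G (A a) \<or>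
      4 * min_degree G \<le> boundary_weight G (A a)"
    using boundary_weight_ge[OF T(1)] a(2) by simp
  ultimately show ?thesis using min_degree_pos
    by (elim disjE; simp only: min_less_iff_disj; arith)
qed

lemma end_singleton_next_to_layer_gt:
  assumes layers: "\<forall>k<n. A k \<subseteq> verts G \<and> A k \<noteq> verts G"
    and a: "a < n" "A a = {x}"
    and b: "b < n" "b = Suc a \<or> a = Suc b" "A b = {}"
    and c: "c < n" "c = Suc a \<or> a = Suc c" "c \<noteq> b" "A c \<noteq> {}"
    and three: "3 \<le> (\<Sum>k<n. card (A k))"
  shows "isolated_edge_bound < layered_boundary G n A"
proof -
  let ?\<delta> = "min_degree G" and ?L = "layered_boundary G n A" and ?E = "layer_edges G A"
  have T: "A a \<subseteq> verts G" and R: "A c \<subseteq> verts G" "finite (A c)"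
    using layers a(1) c(1) finite_vertex_subset by auto
  have ac: "a \<noteq> c" "a \<noteq> b" using b(2) c(2) by auto
  have end_edges: "?E a a + ?E a b = boundary_weight G (A a) + 1"
    using layer_edges_end[OF T b(2,3)] a(2) by simp
  have weight_x: "2 * ?\<delta> \<le> boundary_weight G (A a)"
    using a(2) T min_degree_le by (simp add: boundary_weight_singleton)
  have "(\<Sum>w\<in>A c. Suc (degree G w) - card (A a)) \<le> ?E c a"
    using c(2) a(2) by (intro layer_edges_adjacent_ge) auto
  then have "(\<Sum>w\<in>A c. degree G w) \<le> ?E c a" using a(2) by simp
  then have weight_c: "boundary_weight G (A c) \<le> ?E c a + ?E c c"
    using R(1) by (simp add: boundary_weight_def layer_edges_same_boundary)
  show ?thesis
  proof (cases "2 \<le> card (A c)")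
    case True
    have "?E a a + ?E a b + ?E c c + ?E c a \<le> ?L"
      using sum_layer_edges_le[of "{(a, a), (a, b), (c, c), (c, a)}" n G A] a b c ac by auto
    moreover have "2 * min_edge_degree G + 2 \<le> boundary_weight G (A c) \<or>
        4 * ?\<delta> \<le> boundary_weight G (A c)"
      using boundary_weight_ge[OF R(1) True] True by (auto intro: order_trans[rotated])
    ultimately show ?thesis using end_edges weight_x weight_c min_degree_pos
      by (elim disjE; simp only: min_less_iff_disj; arith)
  next
    case False
    moreover have "0 < card (A c)" using c(4) R(2) by (simp add: card_gt_0_iff)
    ultimately have "card (A c) = 1" by linarith
    then obtain z where z: "A c = {z}" by (rule card_1_singletonE)
    have "\<exists>k<n. k \<noteq> a \<and> k \<noteq> c \<and> A k \<noteq> {}"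
    proof (rule ccontr)
      assume "\<not> ?thesis"
      then have "(\<Sum>k<n. card (A k)) = (\<Sum>k\<in>{a, c}. card (A k))"
        using a(1) c(1) by (intro sum.mono_neutral_right) auto
      then show False using three a(2) z ac by simp
    qed
    then obtain k where k: "k < n" "k \<noteq> a" "k \<noteq> c" "A k \<noteq> {}" by blast
    have "?E a a + ?E a b + ?E a c + ?E c a + ?E c c + ?E k k \<le> ?L"
      using sum_layer_edges_le[of "{(a, a), (a, b), (a, c), (c, a), (c, c), (k, k)}" n G A]
        a b c ac k by auto
    moreover have "1 \<le> ?E k k" using layers k by (intro layer_edges_proper_pos) auto
    moreover have "(\<Sum>w\<in>A a. Suc (degree G w) - card (A c)) \<le> ?E a c"
      using c(2) R(2) by (intro layer_edges_adjacent_ge) auto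
    then have "?\<delta> \<le> ?E a c" using a(2) z T min_degree_le[of x] by simp
    moreover have "2 * ?\<delta> \<le> boundary_weight G (A c)"
      using z R(1) min_degree_le by (simp add: boundary_weight_singleton)
    ultimately show ?thesis using end_edges weight_x weight_c
      by (simp only: min_less_iff_disj; arith)
  qed
qed

lemma end_layer_layered_boundary_gt:
  assumes layers: "\<forall>k<n. A k \<subseteq> verts G \<and> A k \<noteq> verts G"
    and a: "a < n" "A a \<noteq> {}"
    and b: "b < n" "b = Suc a \<or> a = Suc b" "A b = {}"
    and three: "3 \<le> (\<Sum>k<n. card (A k))"
    and next_layer: "(\<exists>k<n. k \<noteq> a \<and> A k \<noteq> {}) \<Longrightarrow>
      \<exists>c<n. (c = Suc a \<or> a = Suc c) \<and> c \<noteq> b \<and> A c \<noteq> {}"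
  shows "isolated_edge_bound < layered_boundary G n A"
proof (cases "3 \<le> card (A a)")
  case True
  have T: "A a \<subseteq> verts G" using layers a(1) by simp
  have "layer_edges G A a a + layer_edges G A a b \<le> layered_boundary G n A"
    using sum_layer_edges_le[of "{(a, a), (a, b)}" n G A] a(1) b by auto
  moreover have "2 * min_edge_degree G + 2 \<le> boundary_weight G (A a) \<or>
      6 * min_degree G \<le> boundary_weight G (A a)"
    using boundary_weight_ge[OF T] True by (auto intro: order_trans[rotated])
  ultimately show ?thesis using layer_edges_end[OF T b(2,3)] True
    by (elim disjE; simp only: min_less_iff_disj; arith)
next
  case False
  have "\<exists>k<n. k \<noteq> a \<and> A k \<noteq> {}"
  proof (rule ccontr)
    assume "\<not> ?thesis"
    then have "(\<Sum>k<n. card (A k)) = (\<Sum>k\<in>{a}. card (A k))"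
      using a(1) by (intro sum.mono_neutral_right) auto
    then show False using three False by simp
  qed
  then obtain c where c: "c < n" "c = Suc a \<or> a = Suc c" "c \<noteq> b" "A c \<noteq> {}"
    using next_layer by blast
  have "0 < card (A a)" using layers a finite_vertex_subset by (simp add: card_gt_0_iff)
  then have "card (A a) = 1 \<or> card (A a) = 2" using False by linarith
  then show ?thesis
  proof
    assume "card (A a) = 1"
    then obtain x where "A a = {x}" by (rule card_1_singletonE)
    with a(1) show ?thesis by (rule end_singleton_next_to_layer_gt[OF layers _ _ b c three])
  qed (rule end_pair_next_to_layer_gt[OF layers a(1) _ b c])
qed

end

section \<open>The strong product with a path\<close>

definition layer :: "('a \<times> nat) set \<Rightarrow> nat \<Rightarrow> 'a set" where
  "layer C k = {x. (x, k) \<in> C}"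

lemma path_graph_edge:
  "{i, j} \<in> edges (path_graph n) \<longleftrightarrow> (j = Suc i \<and> j < n) \<or> (i = Suc j \<and> i < n)"
  by (auto simp: path_graph_def edges_def doubleton_eq_iff)

lemma strong_product_path_edge:
  "{(x, k), (y, l)} \<in> edges (strong_product G (path_graph n)) \<longleftrightarrow>
    x \<in> verts G \<and> y \<in> verts G \<and> k < n \<and> l < n \<and>
    ((x = y \<and> (l = Suc k \<or> k = Suc l)) \<or> (k = l \<and> {x, y} \<in> edges G) \<or>
     ({x, y} \<in> edges G \<and> (l = Suc k \<or> k = Suc l)))"
    (is "_ \<longleftrightarrow> ?rhs")
proof -
  have "{(x, k), (y, l)} \<in> edges (strong_product G (path_graph n)) \<longleftrightarrow>
     (\<exists>x1 y1 x2 y2. {(x, k), (y, l)} = {(x1, y1), (x2, y2)} \<and>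
        x1 \<in> verts G \<and> x2 \<in> verts G \<and> y1 < n \<and> y2 < n \<and>
        ((x1 = x2 \<and> {y1, y2} \<in> edges (path_graph n)) \<or>
         (y1 = y2 \<and> {x1, x2} \<in> edges G) \<or>
         ({x1, x2} \<in> edges G \<and> {y1, y2} \<in> edges (path_graph n))))"
    by (simp add: strong_product_def edges_def verts_def path_graph_def)
  also have "\<dots> \<longleftrightarrow> ?rhs"
    by (auto simp: doubleton_eq_iff insert_commute path_graph_edge)
  finally show ?thesis .
qed

lemma verts_strong_product_path: "verts (strong_product G (path_graph n)) = verts G \<times> {..<n}"
  by (auto simp: strong_product_def verts_def path_graph_def)

lemma layer_subset: "C \<subseteq> V \<times> {..<n} \<Longrightarrow> layer C k \<subseteq> V"
  by (auto simp: layer_def)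

lemma sum_layers:
  assumes "C \<subseteq> V \<times> {..<n}" "finite V"
  shows "(\<Sum>v\<in>C. f v) = (\<Sum>k<n. \<Sum>x\<in>layer C k. f (x, k))"
proof -
  have eq: "C = (\<lambda>(k, x). (x, k)) ` (SIGMA k:{..<n}. layer C k)"
    using assms(1) by (auto simp: layer_def image_iff)
  have inj: "inj_on (\<lambda>(k, x). (x, k)) (SIGMA k:{..<n}. layer C k)"
    by (auto simp: inj_on_def)
  have "(\<Sum>v\<in>C. f v) = (\<Sum>(k, x)\<in>(SIGMA k:{..<n}. layer C k). f (x, k))"
    by (rule sum.reindex_cong[OF inj eq]) auto
  also have "\<dots> = (\<Sum>k<n. \<Sum>x\<in>layer C k. f (x, k))"
    using finite_subset[OF layer_subset[OF assms(1)] assms(2)] by (subst sum.Sigma) auto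
  finally show ?thesis .
qed

lemma card_layers:
  "C \<subseteq> V \<times> {..<n} \<Longrightarrow> finite V \<Longrightarrow> card C = (\<Sum>k<n. card (layer C k))"
  unfolding card_eq_sum by (rule sum_layers)

context simple_graph
begin

abbreviation path_product :: "nat \<Rightarrow> ('a \<times> nat) sgraph" where
  "path_product n \<equiv> strong_product G (path_graph n)"

lemma simple_graph_path_product: "simple_graph (path_product n)"
  unfolding simple_graph_def sgraph_def
proof (intro conjI ballI)
  show "finite (verts (path_product n))"
    using finite_verts by (simp add: verts_strong_product_path)
next
  fix e assume e: "e \<in> edges (path_product n)"
  then obtain x k y l where xy: "e = {(x, k), (y, l)}"
    unfolding strong_product_def edges_def by auto
  with e have "{(x, k), (y, l)} \<in> edges (path_product n)" by simp
  then have "(x, k) \<noteq> (y, l)" "(x, k) \<in> verts (path_product n)"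
    "(y, l) \<in> verts (path_product n)"
    using edge_ends(1) by (auto simp: strong_product_path_edge verts_strong_product_path)
  then show "\<exists>u v. e = {u, v} \<and> u \<noteq> v \<and> u \<in> verts (path_product n) \<and>
      v \<in> verts (path_product n)"
    using xy by blast
qed

lemma neighbours_path_product:
  assumes "x \<in> verts G" "k < n"
  shows "neighbours (path_product n) (x, k) =
    {(y, l). l < n \<and> y \<in> layer_nbhd G x k l}"
  using assms edge_ends neighbours_subset
  by (auto simp: neighbours_def strong_product_path_edge layer_nbhd_def closed_neighbours_def)

lemma card_neighbours_path_product_diff:
  assumes "x \<in> verts G" "k < n"
  shows "card (neighbours (path_product n) (x, k) - C) =
    (\<Sum>l<n. card (layer_nbhd G x k l - layer C l))"
proof -
  have "neighbours (path_product n) (x, k) - C =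
      (\<lambda>(l, y). (y, l)) ` (SIGMA l:{..<n}. layer_nbhd G x k l - layer C l)"
    unfolding neighbours_path_product[OF assms] by (auto simp: layer_def image_iff)
  moreover have "inj_on (\<lambda>(l, y). (y, l)) (SIGMA l:{..<n}. layer_nbhd G x k l - layer C l)"
    by (auto simp: inj_on_def)
  moreover have "finite (layer_nbhd G x k l)" for l
    using finite_neighbours finite_closed_neighbours by (simp add: layer_nbhd_def)
  ultimately show ?thesis by (simp add: card_image)
qed

lemma card_edge_boundary_path_product:
  assumes "C \<subseteq> verts G \<times> {..<n}"
  shows "card (edge_boundary (path_product n) C) = layered_boundary G n (layer C)"
proof -
  interpret X: simple_graph "path_product n"
    by (rule simple_graph_path_product)
  have "card (edge_boundary (path_product n) C) =
      (\<Sum>v\<in>C. card (neighbours (path_product n) v - C))"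
    using assms by (intro X.card_edge_boundary) (simp add: verts_strong_product_path)
  also have "\<dots> = (\<Sum>k<n. \<Sum>x\<in>layer C k.
      card (neighbours (path_product n) (x, k) - C))"
    using assms finite_verts by (rule sum_layers)
  also have "\<dots> = (\<Sum>k<n. \<Sum>x\<in>layer C k. \<Sum>l<n. card (layer_nbhd G x k l - layer C l))"
  proof (rule sum.cong[OF refl], rule sum.cong[OF refl])
    fix k x assume "k \<in> {..<n}" "x \<in> layer C k"
    then show "card (neighbours (path_product n) (x, k) - C) =
        (\<Sum>l<n. card (layer_nbhd G x k l - layer C l))"
      using layer_subset[OF assms] by (intro card_neighbours_path_product_diff) auto
  qed
  also have "\<dots> = (\<Sum>k<n. \<Sum>l<n. layer_edges G (layer C) k l)"
    unfolding layer_edges_def by (rule sum.cong[OF refl]) (rule sum.swap)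
  also have "\<dots> = layered_boundary G n (layer C)"
    unfolding layered_boundary_def by (rule sum.cartesian_product)
  finally show ?thesis .
qed

lemma degree_path_product:
  assumes "x \<in> verts G" "k < n"
  shows "degree (path_product n) (x, k) = (\<Sum>l<n. card (layer_nbhd G x k l))"
proof -
  interpret X: simple_graph "path_product n"
    by (rule simple_graph_path_product)
  show ?thesis
    using card_neighbours_path_product_diff[OF assms, of "{}"]
    by (simp add: X.degree_eq_card_neighbours layer_def)
qed

lemma degree_path_product_0:
  assumes "x \<in> verts G" "2 \<le> n"
  shows "degree (path_product n) (x, 0) = 2 * degree G x + 1"
proof -
  have "(\<Sum>l<n. card (layer_nbhd G x 0 l)) = (\<Sum>l\<in>{0, 1}. card (layer_nbhd G x 0 l))"
    using assms by (intro sum.mono_neutral_right) (auto simp: layer_nbhd_def)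
  then show ?thesis using assms
    by (simp add: degree_path_product layer_nbhd_def card_closed_neighbours
        degree_eq_card_neighbours)
qed

lemma degree_path_product_1:
  assumes "x \<in> verts G" "3 \<le> n"
  shows "degree (path_product n) (x, 1) = 3 * degree G x + 2"
proof -
  have "(\<Sum>l<n. card (layer_nbhd G x 1 l)) = (\<Sum>l\<in>{0, 1, 2}. card (layer_nbhd G x 1 l))"
    using assms by (intro sum.mono_neutral_right) (auto simp: layer_nbhd_def)
  then show ?thesis using assms
    by (simp add: degree_path_product layer_nbhd_def card_closed_neighbours
        degree_eq_card_neighbours)
qed

end

section \<open>Restricted edge cuts of G \<boxtimes> P_n\<close>

lemma interval_end_next_to_empty:
  fixes A :: "nat \<Rightarrow> 'a set"
  assumes interval: "\<forall>k1 k2 m. A k1 \<noteq> {} \<longrightarrow> A k2 \<noteq> {} \<longrightarrow> k1 \<le> m \<longrightarrow> m \<le> k2 \<longrightarrow> A m \<noteq> {}"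
    and k0: "k0 < n" "A k0 \<noteq> {}" and j: "j < n" "A j = {}"
  obtains a b where "a < n" "A a \<noteq> {}" "b < n" "b = Suc a \<or> a = Suc b" "A b = {}"
    "(\<exists>k<n. k \<noteq> a \<and> A k \<noteq> {}) \<Longrightarrow> \<exists>c<n. (c = Suc a \<or> a = Suc c) \<and> c \<noteq> b \<and> A c \<noteq> {}"
proof -
  define K where "K = {k. k < n \<and> A k \<noteq> {}}"
  have K: "k0 \<in> K" "finite K" using k0 by (auto simp: K_def)
  have "k0 \<noteq> j" using k0 j by auto
  then consider "k0 < j" | "j < k0" by linarith
  then show ?thesis
  proof cases
    case 1
    define a where "a = Max K"
    have a: "a \<in> K" "\<And>k. k \<in> K \<Longrightarrow> k \<le> a"
      using K unfolding a_def by (auto intro: Max_in)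
    have "a < j" using interval[rule_format, of k0 a j] a(1) K(1) 1 j by (force simp: K_def)
    then have "A (Suc a) = {}" using a(2)[of "Suc a"] j(1) by (force simp: K_def)
    with \<open>a < j\<close> show ?thesis
    proof (intro that[of a "Suc a"])
      assume "\<exists>k<n. k \<noteq> a \<and> A k \<noteq> {}"
      then obtain k where k: "k \<in> K" "k < a" using a(2) by (force simp: K_def)
      then have "A (a - 1) \<noteq> {}"
        using interval[rule_format, of k a "a - 1"] a(1) by (auto simp: K_def)
      then show "\<exists>c<n. (c = Suc a \<or> a = Suc c) \<and> c \<noteq> Suc a \<and> A c \<noteq> {}"
        using k(2) a(1) by (intro exI[of _ "a - 1"]) (auto simp: K_def)
    qed (use a j in \<open>auto simp: K_def\<close>)
  next
    case 2
    define a where "a = Min K"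
    have a: "a \<in> K" "\<And>k. k \<in> K \<Longrightarrow> a \<le> k"
      using K unfolding a_def by (auto intro: Min_in)
    have "j < a"
      using interval[rule_format, of a k0 j] a(1) a(2)[OF K(1)] K(1) 2 j by (force simp: K_def)
    then obtain b where b: "a = Suc b" by (cases a) auto
    have "A b = {}" using a(1) a(2)[of b] b by (force simp: K_def)
    then show ?thesis
    proof (intro that[of a b])
      assume "\<exists>k<n. k \<noteq> a \<and> A k \<noteq> {}"
      then obtain k where "k \<in> K" "a < k" using a(2) by (force simp: K_def)
      then have "A (Suc a) \<noteq> {}" "Suc a < n"
        using interval[rule_format, of a k "Suc a"] a(1) by (auto simp: K_def)
      then show "\<exists>c<n. (c = Suc a \<or> a = Suc c) \<and> c \<noteq> b \<and> A c \<noteq> {}"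
        using b by auto
    qed (use a b in \<open>auto simp: K_def\<close>)
  qed
qed

context simple_graph
begin

lemma layered_boundary_component_le:
  assumes "S \<subseteq> edges (path_product n)"
  shows "layered_boundary G n (layer (component (del_edges (path_product n) S) v))
    \<le> card S"
proof -
  let ?X = "path_product n"
  let ?D = "component (del_edges ?X S) v"
  interpret X: simple_graph ?X by (rule simple_graph_path_product)
  have "?D \<subseteq> verts G \<times> {..<n}"
    using component_subset[of "del_edges ?X S" v] by (simp add: verts_strong_product_path)
  then have "layered_boundary G n (layer ?D) = card (edge_boundary ?X ?D)"
    by (simp add: card_edge_boundary_path_product)
  also have "\<dots> \<le> card S"
    using assms X.finite_edges X.edge_boundary_component_subset by (meson card_mono finite_subset)
  finally show ?thesis .
qed

lemma component_layers_interval: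
  assumes "(x, k) \<in> component (del_edges (path_product n) S) u"
    and "(y, l) \<in> component (del_edges (path_product n) S) u"
    and "k \<le> j" "j \<le> l"
  shows "layer (component (del_edges (path_product n) S) u) j \<noteq> {}"
proof -
  let ?H = "del_edges (path_product n) S"
  let ?D = "component ?H u"
  interpret X: simple_graph "path_product n"
    by (rule simple_graph_path_product)
  have "reachable ?H u (x, k)" using assms(1) by (simp add: component_def)
  moreover have "reachable ?H (x, k) (y, l)"
    using assms(1,2) reachable_sym reachable_trans
    by (metis (no_types, lifting) component_def mem_Collect_eq)
  moreover have "(adj ?H)\<^sup>*\<^sup>* (x, k) w \<Longrightarrow> reachable ?H u (x, k) \<Longrightarrow> j \<le> snd w \<Longrightarrow>
      \<exists>z. (z, j) \<in> ?D" for w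
  proof (induction rule: rtranclp_induct)
    case base
    then show ?case using assms(1,3) by (intro exI[of _ x]) simp
  next
    case (step w w')
    show ?case
    proof (cases "j \<le> snd w")
      case True
      then show ?thesis using step by blast
    next
      case False
      obtain a i a' i' where w: "w = (a, i)" "w' = (a', i')" by fastforce
      then have e: "{(a, i), (a', i')} \<in> edges (path_product n)"
        using step(2) by (simp add: adj_del_edges)
      then have "i' = j" using False step(5) w by (auto simp: strong_product_path_edge)
      moreover have "reachable ?H u w'"
        using step(1,2,4) unfolding reachable_def by simp
      then have "w' \<in> ?D" using X.edge_ends(3)[OF e] w by (simp add: component_def)
      ultimately show ?thesis using w by blast
    qed
  qed
  ultimately show ?thesis using assms(4) unfolding reachable_def by (auto simp: layer_def)
qed

end

context connected_graph
begin

lemma restricted_edge_connectivity_path_product_le_edge_degree: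
  assumes "3 \<le> n"
  shows "restricted_edge_connectivity (path_product n) \<le> 2 * min_edge_degree G + 4"
proof -
  interpret X: simple_graph "path_product n"
    by (rule simple_graph_path_product)
  obtain x y where xy: "{x, y} \<in> edges G" "degree G x + degree G y = min_edge_degree G + 2"
    using min_edge_degree_attained by blast
  have x: "x \<in> verts G" "y \<in> verts G" "x \<noteq> y" using edge_ends[OF xy(1)] by auto
  let ?u = "(x, 0::nat)" and ?v = "(y, 0::nat)"
  have uv: "{?u, ?v} \<in> edges (path_product n)"
    using x xy(1) assms by (simp add: strong_product_path_edge)
  have "\<exists>z'. {z, z'} \<in> edges (path_product n) \<and> z' \<notin> {?u, ?v}"
    if z_in: "z \<in> verts (path_product n)" "z \<notin> {?u, ?v}" for z
  proof -
    obtain a k where z: "z = (a, k)" "a \<in> verts G" "k < n"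
      using z_in(1) by (auto simp: verts_strong_product_path)
    show ?thesis
    proof (cases "k = 0")
      case True
      then show ?thesis
        using z assms by (intro exI[of _ "(a, 1)"]) (simp add: strong_product_path_edge)
    next
      case False
      obtain a' where "a' \<in> neighbours G a" using neighbours_nonempty z(2) by blast
      then show ?thesis
        using z False edge_ends[of a a']
        by (intro exI[of _ "(a', k)"]) (auto simp: neighbours_def strong_product_path_edge)
    qed
  qed
  then have "restricted_edge_cut (path_product n) (edge_boundary (path_product n) {?u, ?v})"
    using x assms uv
    by (intro X.restricted_edge_cut_edge_boundary_edge[where w = "(x, 2)"])
       (auto simp: verts_strong_product_path)
  then have "restricted_edge_connectivity (path_product n) \<le>
      card (edge_boundary (path_product n) {?u, ?v})"
    by (rule X.restricted_edge_connectivity_le)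
  also have "\<dots> = 2 * min_edge_degree G + 4"
    using X.card_edge_boundary_edge[OF uv] xy(2) x assms
    by (simp add: degree_path_product_0)
  finally show ?thesis .
qed

lemma restricted_edge_connectivity_path_product_le_min_degree:
  assumes "3 \<le> n"
  shows "restricted_edge_connectivity (path_product n) \<le> 5 * min_degree G + 1"
proof -
  interpret X: simple_graph "path_product n"
    by (rule simple_graph_path_product)
  obtain x where x: "x \<in> verts G" "degree G x = min_degree G" using min_degree_attained by blast
  let ?u = "(x, 0::nat)" and ?v = "(x, 1::nat)"
  have uv: "{?u, ?v} \<in> edges (path_product n)"
    using x assms by (simp add: strong_product_path_edge)
  have "\<exists>z'. {z, z'} \<in> edges (path_product n) \<and> z' \<notin> {?u, ?v}"
    if z_in: "z \<in> verts (path_product n)" "z \<notin> {?u, ?v}" for z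
  proof -
    obtain a k where z: "z = (a, k)" "a \<in> verts G" "k < n"
      using z_in(1) by (auto simp: verts_strong_product_path)
    show ?thesis
    proof (cases "a = x")
      case False
      then show ?thesis using z assms
        by (intro exI[of _ "(a, if k = 0 then 1 else k - 1)"]) (auto simp: strong_product_path_edge)
    next
      case True
      obtain a' where "a' \<in> neighbours G a" using neighbours_nonempty z(2) by blast
      then show ?thesis
        using z True z_in(2) edge_ends[of a a']
        by (intro exI[of _ "(a', k)"]) (auto simp: neighbours_def strong_product_path_edge)
    qed
  qed
  then have "restricted_edge_cut (path_product n) (edge_boundary (path_product n) {?u, ?v})"
    using x assms uv
    by (intro X.restricted_edge_cut_edge_boundary_edge[where w = "(x, 2)"])
       (auto simp: verts_strong_product_path)
  then have "restricted_edge_connectivity (path_product n) \<le>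
      card (edge_boundary (path_product n) {?u, ?v})"
    by (rule X.restricted_edge_connectivity_le)
  also have "\<dots> = 5 * min_degree G + 1"
    using X.card_edge_boundary_edge[OF uv] degree_path_product_0[OF x(1)]
      degree_path_product_1[OF x(1) assms] x(2) assms by simp
  finally show ?thesis .
qed

lemma four_edge_connectivity_le: "4 * edge_connectivity G \<le> isolated_edge_bound"
proof -
  obtain x y where xy: "{x, y} \<in> edges G" "degree G x + degree G y = min_edge_degree G + 2"
    using min_edge_degree_attained by blast
  then have "2 * min_degree G \<le> min_edge_degree G + 2"
    using edge_ends[OF xy(1)] min_degree_le by (metis add_le_mono mult_2)
  then show ?thesis using edge_connectivity_le_min_degree by simp
qed

lemma component_layered_boundary_gt:
  assumes D: "D = component (del_edges (path_product n) S) v"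
    and v: "v \<in> verts (path_product n)" and three: "3 \<le> card D"
    and empty: "j < n" "layer D j = {}" and not_full: "\<forall>k<n. layer D k \<noteq> verts G"
  shows "isolated_edge_bound < layered_boundary G n (layer D)"
proof -
  have DX: "D \<subseteq> verts G \<times> {..<n}"
    using D component_subset[of "del_edges (path_product n) S" v]
    by (simp add: verts_strong_product_path)
  have layers: "\<forall>k<n. layer D k \<subseteq> verts G \<and> layer D k \<noteq> verts G"
    using layer_subset[OF DX] not_full by blast
  have total: "3 \<le> (\<Sum>k<n. card (layer D k))" using three card_layers[OF DX finite_verts] by simp
  have interval: "\<forall>k1 k2 m. layer D k1 \<noteq> {} \<longrightarrow> layer D k2 \<noteq> {} \<longrightarrow> k1 \<le> m \<longrightarrow> m \<le> k2 \<longrightarrow>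
      layer D m \<noteq> {}"
  proof (intro allI impI)
    fix k1 k2 m assume "layer D k1 \<noteq> {}" "layer D k2 \<noteq> {}" "k1 \<le> m" "m \<le> k2"
    then obtain x y where "(x, k1) \<in> D" "(y, k2) \<in> D" "k1 \<le> m" "m \<le> k2" by (auto simp: layer_def)
    then show "layer D m \<noteq> {}" using component_layers_interval by (simp add: D)
  qed
  obtain x0 k0 where v0: "v = (x0, k0)" "k0 < n" using v by (auto simp: verts_strong_product_path)
  have "v \<in> D" using v unfolding D by (intro in_component_self) simp
  then have "layer D k0 \<noteq> {}" using v0 by (auto simp: layer_def)
  then obtain a b where "a < n" "layer D a \<noteq> {}" "b < n"
    "b = Suc a \<or> a = Suc b" "layer D b = {}"
    "(\<exists>k<n. k \<noteq> a \<and> layer D k \<noteq> {}) \<Longrightarrow>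
      \<exists>c<n. (c = Suc a \<or> a = Suc c) \<and> c \<noteq> b \<and> layer D c \<noteq> {}"
    using interval_end_next_to_empty[OF interval v0(2) _ empty] by blast
  then show ?thesis by (rule end_layer_layered_boundary_gt[OF layers _ _ _ _ _ total])
qed

lemma separated_components_cut_gt:
  assumes n: "3 \<le> n"
    and bound: "isolated_edge_bound <
      min ((3 * n - 2) * edge_connectivity G) (card (verts G) + 2 * num_edges G)"
    and S: "S \<subseteq> edges (path_product n)"
    and uw: "u \<in> verts (path_product n)" "w \<in> verts (path_product n)"
      "\<not> reachable (del_edges (path_product n) S) u w"
    and large: "\<And>v. v \<in> verts (path_product n) \<Longrightarrow>
      3 \<le> card (component (del_edges (path_product n) S) v)"
  shows "isolated_edge_bound < card S"
proof -
  let ?H = "del_edges (path_product n) S"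
  let ?A = "layer (component ?H u)"
  have layers: "\<forall>k<n. ?A k \<subseteq> verts G"
    using component_subset[of ?H u] by (auto simp: layer_def verts_strong_product_path)
  have cut: "layered_boundary G n (layer (component ?H v)) \<le> card S" for v
    using S by (rule layered_boundary_component_le)
  consider (full_empty) i j where "i < n" "j < n" "?A i = verts G" "?A j = {}"
    | (empty) j where "j < n" "?A j = {}" "\<forall>k<n. ?A k \<noteq> verts G"
    | (proper) "\<forall>k<n. ?A k \<noteq> {} \<and> ?A k \<noteq> verts G"
    | (full) i where "i < n" "?A i = verts G" "\<forall>k<n. ?A k \<noteq> {}"
    by blast
  then show ?thesis
  proof cases
    case full_empty
    then show ?thesis
      using full_and_empty_layers_layered_boundary_ge[OF layers] bound cut[of u] by fastforce
  next
    case empty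
    then show ?thesis
      using component_layered_boundary_gt[OF refl uw(1) large[OF uw(1)]] cut[of u] by fastforce
  next
    case proper
    then show ?thesis
      using proper_layers_layered_boundary_ge[of n ?A] layers n bound cut[of u] by fastforce
  next
    case full
    let ?D = "layer (component ?H w)"
    have disjoint: "component ?H u \<inter> component ?H w = {}"
      using uw by (intro components_disjoint) (auto simp: component_def)
    then have "?D i = {}" using full(2) component_subset[of ?H w]
      by (auto simp: layer_def verts_strong_product_path)
    moreover have "\<forall>k<n. ?D k \<noteq> verts G"
      using full(3) disjoint layers by (force simp: layer_def)
    ultimately show ?thesis
      using component_layered_boundary_gt[OF refl uw(2) large[OF uw(2)] full(1)] cut[of w]
      by fastforce
  qed
qed

lemma restricted_cut_gt_or_isolates_edge:
  assumes n: "3 \<le> n"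
    and bound: "isolated_edge_bound <
      min ((3 * n - 2) * edge_connectivity G) (card (verts G) + 2 * num_edges G)"
    and S: "restricted_edge_cut (path_product n) S"
  shows "isolated_edge_bound < card S \<or>
    (\<exists>v\<in>verts (path_product n). card (component (del_edges (path_product n) S) v) = 2)"
proof (rule disjCI)
  assume no_edge:
    "\<not> (\<exists>v\<in>verts (path_product n). card (component (del_edges (path_product n) S) v) = 2)"
  have cut: "S \<subseteq> edges (path_product n)"
    using S by (simp add: restricted_edge_cut_def edge_cut_def)
  obtain u w where uw: "u \<in> verts (path_product n)" "w \<in> verts (path_product n)"
    "\<not> reachable (del_edges (path_product n) S) u w"
    using S by (auto simp: restricted_edge_cut_def edge_cut_def connected_def)
  have "3 \<le> card (component (del_edges (path_product n) S) v)"
    if "v \<in> verts (path_product n)" for v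
    using S no_edge that by (force simp: restricted_edge_cut_def)
  then show "isolated_edge_bound < card S" by (rule separated_components_cut_gt[OF n bound cut uw])
qed

end

theorem corollary3p3:
  fixes G :: "'a sgraph" and n :: nat
  assumes "sgraph G" and "connected G" and "nontrivial G"
    and "n \<ge> 2"
    and "min ((3 * n - 2) * edge_connectivity G) (card (verts G) + 2 * num_edges G)
         > min (2 * min_edge_degree G + 4) (5 * min_degree G + 1)"
  shows "super_restricted_edge_connected (strong_product G (path_graph n))"
proof -
  interpret connected_graph G using assms(1-3) by unfold_locales
  have n: "3 \<le> n"
  proof (rule ccontr)
    assume "\<not> 3 \<le> n"
    then have "n = 2" using assms(4) by simp
    then show False
      using assms(5) four_edge_connectivity_le by (auto simp: min_def split: if_splits)
  qed
  have "restricted_edge_connectivity (strong_product G (path_graph n)) \<le>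
      min (2 * min_edge_degree G + 4) (5 * min_degree G + 1)"
    using restricted_edge_connectivity_path_product_le_edge_degree[OF n]
      restricted_edge_connectivity_path_product_le_min_degree[OF n] by simp
  then show ?thesis
    using restricted_cut_gt_or_isolates_edge[OF n assms(5)]
    unfolding super_restricted_edge_connected_def by fastforce
qed

end
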